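(* Let $R$ be a commutative Noetherian ring, $n$ a non-negative integer and $L$ an $R$-module which is in dimension $<n$. Then the set $\{\mathfrak p\in\operatorname{Ass}_R L:\dim R/\mathfrak p\ge n\}$ is finite.
   Context: For an $R$-module $L$, $\dim\operatorname{Supp}L=\sup\{\dim R/\mathfrak p:\mathfrak p\in\operatorname{Supp}L\}$, the zero module having dimension $-\infty$. An $R$-module $L$ is "in dimension $<n$" if there is a finitely generated submodule $N\subseteq L$ with $\dim\operatorname{Supp}(L/N)<n$. *)

theory Defs
  imports Main "HOL-Library.Extended_Real"
begin

definition is_ideal :: "'a::comm_ring_1 set \<Rightarrow> bool" where
  "is_ideal I \<longleftrightarrow> 0 \<in> I \<and> (\<forall>x\<in>I. \<forall>y\<in>I. x + y \<in> I) \<and> (\<forall>r. \<forall>x\<in>I. r * x \<in> I)"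

definition prime_ideal :: "'a::comm_ring_1 set \<Rightarrow> bool" where
  "prime_ideal P \<longleftrightarrow> is_ideal P \<and> P \<noteq> UNIV \<and> (\<forall>a b. a * b \<in> P \<longrightarrow> a \<in> P \<or> b \<in> P)"

definition noetherian_cring :: "'a::comm_ring_1 itself \<Rightarrow> bool" where
  "noetherian_cring (_::'a itself) \<longleftrightarrow>
     (\<forall>C :: nat \<Rightarrow> 'a set. (\<forall>i. is_ideal (C i)) \<and> (\<forall>i. C i \<subseteq> C (Suc i))
        \<longrightarrow> (\<exists>m. \<forall>k\<ge>m. C k = C m))"

text \<open>Krull dimension of R/p: supremum of lengths of chains of prime ideals
  p = p_0 \<subset> p_1 \<subset> ... \<subset> p_k (primes of R/p correspond to primes containing p).\<close>
definition dim_quot :: "'a::comm_ring_1 set \<Rightarrow> enat" where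
  "dim_quot p = Sup {enat k | k. \<exists>c :: nat \<Rightarrow> 'a set. c 0 = p \<and>
      (\<forall>i\<le>k. prime_ideal (c i)) \<and> (\<forall>i<k. c i \<subset> c (Suc i))}"

text \<open>Support of the quotient module L/N: primes p with (L/N)_p \<noteq> 0, i.e. some
  x whose class does not vanish after localising at p.\<close>
definition supp_quot :: "('a::comm_ring_1 \<Rightarrow> 'b::ab_group_add \<Rightarrow> 'b) \<Rightarrow> 'b set \<Rightarrow> 'a set set" where
  "supp_quot scale N = {p. prime_ideal p \<and> (\<exists>x. \<forall>s. s \<notin> p \<longrightarrow> scale s x \<notin> N)}"

text \<open>dim Supp, with the empty support having dimension -\<infinity>.\<close>
definition dim_supp :: "'a::comm_ring_1 set set \<Rightarrow> ereal" where
  "dim_supp S = Sup ((\<lambda>p. ereal_of_enat (dim_quot p)) ` S)"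

definition Ass :: "('a::comm_ring_1 \<Rightarrow> 'b::ab_group_add \<Rightarrow> 'b) \<Rightarrow> 'a set set" where
  "Ass scale = {p. prime_ideal p \<and> (\<exists>x. p = {r. scale r x = 0})}"

definition in_dim_less :: "('a::comm_ring_1 \<Rightarrow> 'b::ab_group_add \<Rightarrow> 'b) \<Rightarrow> nat \<Rightarrow> bool" where
  "in_dim_less scale n \<longleftrightarrow>
     (\<exists>F. finite F \<and> dim_supp (supp_quot scale (module.span scale F)) < ereal (real n))"

end

theory Submission
  imports Defs
begin

text \<open>An associated prime \<open>p\<close> with \<open>dim R/p \<ge> n\<close> lies outside \<open>Supp(L/N)\<close>, hence becomes
  associated to an element of the finitely generated submodule \<open>N\<close> after multiplying by some
  \<open>s \<notin> p\<close>. So it suffices that a finitely generated module over a Noetherian ring has finitely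
  many associated primes. Adding one generator \<open>a\<close> at a time, a new associated prime of
  \<open>N + Ra\<close> is either associated to \<open>N\<close> or to the cyclic module \<open>R/I\<close>, \<open>I\<close> the annihilator of
  \<open>a\<close> modulo \<open>N\<close>; and \<open>Ass(R/I)\<close> is finite by Noetherian induction on \<open>I\<close>: a maximal
  annihilator \<open>q = (I : c)\<close> is prime, and \<open>Ass(R/I) \<subseteq> {q} \<union> Ass(R/(I + Rc))\<close>.\<close>

lemma is_ideal_mult_right: "is_ideal I \<Longrightarrow> x \<in> I \<Longrightarrow> x * r \<in> I"
  unfolding is_ideal_def by (metis mult.commute)

lemma one_notin_prime_ideal: "prime_ideal p \<Longrightarrow> 1 \<notin> p"
  unfolding prime_ideal_def is_ideal_def by (metis UNIV_eq_I mult.right_neutral)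

lemma prime_ideal_mult_right_iff:
  assumes "prime_ideal p" and "r \<notin> p"
  shows "t * r \<in> p \<longleftrightarrow> t \<in> p"
  using assms unfolding prime_ideal_def is_ideal_def by (metis mult.commute)

definition ann_mod :: "('a::comm_ring_1 \<Rightarrow> 'b::ab_group_add \<Rightarrow> 'b) \<Rightarrow> 'b set \<Rightarrow> 'b \<Rightarrow> 'a set" where
  "ann_mod scale K y = {r. scale r y \<in> K}"

text \<open>\<open>ass_mod scale K Y\<close> consists of the primes of \<open>Ass(L/K)\<close> realised by classes of elements
  of \<open>Y\<close>; so \<open>Ass L = ass_mod scale {0} UNIV\<close> and \<open>Ass(R/I) = ass_mod (*) I UNIV\<close>.\<close>
definition ass_mod :: "('a::comm_ring_1 \<Rightarrow> 'b::ab_group_add \<Rightarrow> 'b) \<Rightarrow> 'b set \<Rightarrow> 'b set \<Rightarrow> 'a set set" where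
  "ass_mod scale K Y = {p. prime_ideal p \<and> (\<exists>y\<in>Y. p = ann_mod scale K y)}"

context module
begin

lemma one_mem_ann_mod_iff: "1 \<in> ann_mod scale K y \<longleftrightarrow> y \<in> K"
  by (simp add: ann_mod_def)

lemma is_ideal_ann_mod: "subspace K \<Longrightarrow> is_ideal (ann_mod scale K y)"
  unfolding is_ideal_def ann_mod_def
  by (auto simp: subspace_0 subspace_add scale_left_distrib)
    (metis scale_scale subspace_scale)

lemma ann_mod_scale: "ann_mod scale K (scale r y) = {t. t * r \<in> ann_mod scale K y}"
  by (simp add: ann_mod_def)

lemma ann_mod_scale_prime:
  assumes "prime_ideal (ann_mod scale K y)" and "r \<notin> ann_mod scale K y"
  shows "ann_mod scale K (scale r y) = ann_mod scale K y"
  using prime_ideal_mult_right_iff[OF assms] by (auto simp: ann_mod_scale)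

lemma ann_mod_add_left:
  assumes K: "subspace K" and "k \<in> K"
  shows "ann_mod scale K (k + w) = ann_mod scale K w"
proof -
  have "scale t k + x \<in> K \<longleftrightarrow> x \<in> K" for t x
    using subspace_scale[OF K \<open>k \<in> K\<close>, of t] K
    by (metis add_diff_cancel_left' subspace_add subspace_diff)
  then show ?thesis
    by (simp add: ann_mod_def scale_right_distrib)
qed

lemma ann_mod_prime_cases:
  assumes "K \<subseteq> K'" and prime: "prime_ideal (ann_mod scale K y)"
  obtains "ann_mod scale K y = ann_mod scale K' y"
  | r where "r \<notin> ann_mod scale K y" and "scale r y \<in> K'"
      and "ann_mod scale K (scale r y) = ann_mod scale K y"
proof (cases "ann_mod scale K y = ann_mod scale K' y")
  case False
  moreover have "ann_mod scale K y \<subseteq> ann_mod scale K' y"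
    using \<open>K \<subseteq> K'\<close> by (auto simp: ann_mod_def)
  ultimately obtain r where "r \<notin> ann_mod scale K y" and "scale r y \<in> K'"
    by (auto simp: ann_mod_def)
  with ann_mod_scale_prime[OF prime] that(2) show thesis by blast
qed

lemma prime_ann_mod_if_maximal:
  assumes K: "subspace K" and "c \<notin> K"
    and maximal: "\<And>y. y \<notin> K \<Longrightarrow> ann_mod scale K c \<subseteq> ann_mod scale K y
                    \<Longrightarrow> ann_mod scale K y = ann_mod scale K c"
  shows "prime_ideal (ann_mod scale K c)"
  unfolding prime_ideal_def
proof (intro conjI allI impI)
  show ideal: "is_ideal (ann_mod scale K c)"
    using K by (rule is_ideal_ann_mod)
  show "ann_mod scale K c \<noteq> UNIV"
    using \<open>c \<notin> K\<close> one_mem_ann_mod_iff by blast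
  fix a b
  assume ab: "a * b \<in> ann_mod scale K c"
  show "a \<in> ann_mod scale K c \<or> b \<in> ann_mod scale K c"
  proof (rule disjCI)
    assume "b \<notin> ann_mod scale K c"
    then have "scale b c \<notin> K"
      by (simp add: ann_mod_def)
    moreover have "ann_mod scale K c \<subseteq> ann_mod scale K (scale b c)"
      using ideal by (auto simp: ann_mod_scale intro: is_ideal_mult_right)
    ultimately have "ann_mod scale K (scale b c) = ann_mod scale K c"
      by (rule maximal)
    moreover have "a \<in> ann_mod scale K (scale b c)"
      using ab by (simp add: ann_mod_scale)
    ultimately show "a \<in> ann_mod scale K c"
      by simp
  qed
qed

text \<open>\<open>span (K \<union> F)\<close> plays the role of \<open>K + span F\<close>.\<close>
lemma ass_mod_span_insert:
  assumes K: "subspace K"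
  shows "ass_mod scale K (span (insert a F))
    \<subseteq> ass_mod (*) (ann_mod scale (span (K \<union> F)) a) UNIV \<union> ass_mod scale K (span F)"
proof
  fix p
  assume "p \<in> ass_mod scale K (span (insert a F))"
  then obtain y where prime: "prime_ideal p" and "y \<in> span (insert a F)"
    and p: "p = ann_mod scale K y"
    by (auto simp: ass_mod_def)
  then obtain c where z: "y - scale c a \<in> span F"
    by (auto simp: span_insert)
  define K' where "K' = span (K \<union> F)"
  have "K \<subseteq> K'"
    using span_superset unfolding K'_def by blast
  show "p \<in> ass_mod (*) (ann_mod scale K' a) UNIV \<union> ass_mod scale K (span F)"
  proof (cases rule: ann_mod_prime_cases[OF \<open>K \<subseteq> K'\<close> prime[unfolded p]])
    case 1
    have "y - scale c a \<in> K'"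
      using z span_mono[of F "K \<union> F"] unfolding K'_def by blast
    then have "ann_mod scale K' y = ann_mod scale K' (scale c a)"
      using ann_mod_add_left[of K' "y - scale c a" "scale c a"] by (simp add: K'_def)
    also have "\<dots> = ann_mod (*) (ann_mod scale K' a) c"
      by (simp add: ann_mod_def)
    finally show ?thesis
      using 1 prime p by (auto simp: ass_mod_def)
  next
    case (2 r)
    moreover have "span K = K"
      using K by simp
    ultimately obtain k w where "k \<in> K" "w \<in> span F" and "scale r y = k + w"
      by (auto simp: K'_def span_Un)
    then have "p = ann_mod scale K w"
      using 2 K p by (simp add: ann_mod_add_left)
    then show ?thesis
      using prime \<open>w \<in> span F\<close> by (auto simp: ass_mod_def)
  qed
qed

end

interpretation ring_module: module "(*) :: 'a::comm_ring_1 \<Rightarrow> 'a \<Rightarrow> 'a"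
  by unfold_locales (simp_all add: algebra_simps)

lemma ring_module_subspace_iff: "ring_module.subspace I \<longleftrightarrow> is_ideal I"
  by (simp add: ring_module.subspace_def is_ideal_def)

lemma wf_ideal_psupset:
  assumes "noetherian_cring TYPE('a::comm_ring_1)"
  shows "wf {(J, I :: 'a set). is_ideal I \<and> is_ideal J \<and> I \<subset> J}"
  unfolding wf_iff_no_infinite_down_chain
proof
  assume "\<exists>f. \<forall>i. (f (Suc i), f i) \<in> {(J, I :: 'a set). is_ideal I \<and> is_ideal J \<and> I \<subset> J}"
  then obtain C :: "nat \<Rightarrow> 'a set" where C: "\<And>i. is_ideal (C i) \<and> C i \<subset> C (Suc i)"
    by blast
  then have "(\<forall>i. is_ideal (C i)) \<and> (\<forall>i. C i \<subseteq> C (Suc i))"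
    by auto
  with assms obtain m where "\<forall>k\<ge>m. C k = C m"
    unfolding noetherian_cring_def by blast
  then have "C (Suc m) = C m"
    by (blast intro: le_SucI)
  with C[of m] show False
    by simp
qed

lemma ex_prime_ann_mod_ideal:
  assumes N: "noetherian_cring TYPE('a::comm_ring_1)"
    and M: "is_ideal (M :: 'a set)" and "M \<noteq> UNIV"
  obtains c where "c \<notin> M" and "prime_ideal (ann_mod (*) M c)"
proof -
  define Q where "Q = {ann_mod (*) M y | y. y \<notin> M}"
  obtain c0 where "c0 \<notin> M"
    using \<open>M \<noteq> UNIV\<close> by blast
  then have "ann_mod (*) M c0 \<in> Q"
    by (auto simp: Q_def)
  then obtain q where "q \<in> Q"
    and q_maximal: "\<And>J. (J, q) \<in> {(J, I). is_ideal I \<and> is_ideal J \<and> I \<subset> J} \<Longrightarrow> J \<notin> Q"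
    by (rule wfE_min[OF wf_ideal_psupset[OF N]]) blast
  then obtain c where c: "c \<notin> M" and q: "q = ann_mod (*) M c"
    by (auto simp: Q_def)
  have M': "ring_module.subspace M"
    using M by (simp add: ring_module_subspace_iff)
  have "prime_ideal (ann_mod (*) M c)"
  proof (rule ring_module.prime_ann_mod_if_maximal[OF M' c])
    fix y
    assume "y \<notin> M" and le: "ann_mod (*) M c \<subseteq> ann_mod (*) M y"
    show "ann_mod (*) M y = ann_mod (*) M c"
    proof (rule ccontr)
      assume "ann_mod (*) M y \<noteq> ann_mod (*) M c"
      with le have "(ann_mod (*) M y, q) \<in> {(J, I). is_ideal I \<and> is_ideal J \<and> I \<subset> J}"
        using ring_module.is_ideal_ann_mod[OF M'] q by auto
      with \<open>y \<notin> M\<close> q_maximal show False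
        by (auto simp: Q_def)
    qed
  qed
  with c that show thesis
    by blast
qed

lemma ass_mod_ideal_subset_insert:
  assumes M: "is_ideal M" and q: "prime_ideal (ann_mod (*) M c)"
  shows "ass_mod (*) M UNIV \<subseteq> insert (ann_mod (*) M c) (ass_mod (*) (ring_module.span (insert c M)) UNIV)"
proof
  fix p
  assume "p \<in> ass_mod (*) M UNIV"
  then obtain y where prime: "prime_ideal p" and p: "p = ann_mod (*) M y"
    by (auto simp: ass_mod_def)
  have M': "ring_module.subspace M"
    using M by (simp add: ring_module_subspace_iff)
  have "M \<subseteq> ring_module.span (insert c M)"
    by (meson ring_module.span_superset subset_insertI subset_trans)
  show "p \<in> insert (ann_mod (*) M c) (ass_mod (*) (ring_module.span (insert c M)) UNIV)"
  proof (cases rule: ring_module.ann_mod_prime_cases[OF \<open>M \<subseteq> _\<close> prime[unfolded p]])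
    case 1
    with prime p show ?thesis
      by (auto simp: ass_mod_def)
  next
    case (2 r)
    moreover have "ring_module.span M = M"
      using M' by simp
    ultimately obtain s where "r * y - s * c \<in> M"
      by (auto simp: ring_module.span_insert)
    then have p_sc: "p = ann_mod (*) M (s * c)"
      using 2 p ring_module.ann_mod_add_left[OF M', of "r * y - s * c" "s * c"] by simp
    then have "s \<notin> ann_mod (*) M c"
      using one_notin_prime_ideal[OF prime] by (simp add: ann_mod_def)
    then show ?thesis
      using p_sc ring_module.ann_mod_scale_prime[OF q] by simp
  qed
qed

lemma finite_ass_mod_ideal:
  assumes N: "noetherian_cring TYPE('a::comm_ring_1)"
  shows "is_ideal (I :: 'a set) \<Longrightarrow> finite (ass_mod (*) I UNIV)"
proof (induction I rule: wf_induct_rule[OF wf_ideal_psupset[OF N]])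
  case (1 M)
  show ?case
  proof (cases "M = UNIV")
    case True
    then show ?thesis
      using one_notin_prime_ideal by (auto simp: ass_mod_def ann_mod_def)
  next
    case False
    with N \<open>is_ideal M\<close> obtain c where "c \<notin> M" and q: "prime_ideal (ann_mod (*) M c)"
      by (rule ex_prime_ann_mod_ideal)
    define M' where "M' = ring_module.span (insert c M)"
    have "is_ideal M'"
      using ring_module_subspace_iff M'_def by blast
    moreover have "M \<subset> M'"
      using \<open>c \<notin> M\<close> ring_module.span_superset unfolding M'_def by blast
    ultimately have "finite (ass_mod (*) M' UNIV)"
      using 1 by blast
    then show ?thesis
      using ass_mod_ideal_subset_insert[OF \<open>is_ideal M\<close> q] unfolding M'_def
      by (meson finite_insert finite_subset)
  qed
qed

context module
begin

lemma finite_ass_mod_span: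
  assumes N: "noetherian_cring TYPE('a)" and K: "subspace K" and "finite F"
  shows "finite (ass_mod scale K (span F))"
  using \<open>finite F\<close>
proof (induction F rule: finite_induct)
  case empty
  have "ann_mod scale K 0 = UNIV"
    using subspace_0[OF K] by (simp add: ann_mod_def)
  then show ?case
    using one_notin_prime_ideal by (auto simp: ass_mod_def)
next
  case (insert a F)
  have "finite (ass_mod (*) (ann_mod scale (span (K \<union> F)) a) UNIV)"
    using finite_ass_mod_ideal[OF N] is_ideal_ann_mod[OF subspace_span] by blast
  with insert.IH show ?case
    using ass_mod_span_insert[OF K] by (meson finite_UnI finite_subset)
qed

lemma Ass_mem_ass_mod_if_notin_supp_quot:
  assumes "p \<in> Ass scale" and "p \<notin> supp_quot scale N"
  shows "p \<in> ass_mod scale {0} N"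
proof -
  obtain x where prime: "prime_ideal p" and p: "p = ann_mod scale {0} x"
    using assms(1) by (auto simp: Ass_def ann_mod_def)
  then obtain s where "s \<notin> p" and sx: "scale s x \<in> N"
    using assms(2) by (auto simp: supp_quot_def)
  with prime p have "p = ann_mod scale {0} (scale s x)"
    using ann_mod_scale_prime by simp
  with prime sx show ?thesis
    by (auto simp: ass_mod_def)
qed

end

lemma dim_quot_less_if_mem:
  assumes "p \<in> S" and "dim_supp S < ereal (real n)"
  shows "dim_quot p < enat n"
proof -
  have "ereal_of_enat (dim_quot p) \<le> dim_supp S"
    unfolding dim_supp_def using assms(1) by (rule SUP_upper)
  then have "ereal_of_enat (dim_quot p) < ereal_of_enat (enat n)"
    using assms(2) by simp
  then show ?thesis
    by (simp only: ereal_of_enat_less_iff)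
qed

theorem lemma2p6:
  fixes scale :: "'a::comm_ring_1 \<Rightarrow> 'b::ab_group_add \<Rightarrow> 'b" and n :: nat
  assumes "noetherian_cring TYPE('a)"
    and "module scale"
    and "in_dim_less scale n"
  shows "finite {p \<in> Ass scale. dim_quot p \<ge> enat n}"
proof -
  interpret module scale by (rule assms(2))
  obtain F where "finite F" and dim: "dim_supp (supp_quot scale (span F)) < ereal (real n)"
    using assms(3) unfolding in_dim_less_def by blast
  have "p \<in> ass_mod scale {0} (span F)" if "p \<in> Ass scale" and "dim_quot p \<ge> enat n" for p
  proof (rule Ass_mem_ass_mod_if_notin_supp_quot[OF that(1)])
    show "p \<notin> supp_quot scale (span F)"
      using dim_quot_less_if_mem[OF _ dim] that(2) by (auto simp: not_le[symmetric])
  qed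
  then have "{p \<in> Ass scale. dim_quot p \<ge> enat n} \<subseteq> ass_mod scale {0} (span F)"
    by blast
  moreover have "finite (ass_mod scale {0} (span F))"
    using finite_ass_mod_span[OF assms(1) subspace_single_0 \<open>finite F\<close>] .
  ultimately show ?thesis
    by (rule finite_subset)
qed

end
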